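(* Let $\nu>-1$ and $p,q\in\mathbb{R}$. Then the inequalities $$(1-p)\frac{1}{\mathcal{I}_{\nu+1}(x)}+p\frac{\mathcal{I}_{\nu}(x)}{\mathcal{I}_{\nu+1}(x)}>1>(1-q)\frac{1}{\mathcal{I}_{\nu+1}(x)}+q\frac{\mathcal{I}_{\nu}(x)}{\mathcal{I}_{\nu+1}(x)}$$ hold for all $x\in(0,\infty)$ if and only if $p\geq\frac{\nu+1}{\nu+2}$ and $q\leq 0$.
   Context: For $\mu>-1$, $I_\mu(x)=\sum_{n\geq0}\frac{(x/2)^{\mu+2n}}{n!\,\Gamma(\mu+n+1)}$ is the modified Bessel function of the first kind, and $\mathcal{I}_\mu:\mathbb{R}\to[1,\infty)$ is the normalized modified Bessel function $$\mathcal{I}_{\mu}(x)=2^{\mu}\Gamma(\mu+1)x^{-\mu}I_{\mu}(x)=\sum_{n\geq0}\frac{(1/4)^n}{(\mu+1)_n\, n!}x^{2n},$$ where $(\mu+1)_n=\Gamma(\mu+n+1)/\Gamma(\mu+1)$ is the Pochhammer symbol. In particular $\mathcal{I}_{-1/2}(x)=\cosh x$ and $\mathcal{I}_{1/2}(x)=\frac{\sinh x}{x}$. *)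

theory Defs
  imports "HOL-Analysis.Analysis"
begin

definition normBesselI :: "real \<Rightarrow> real \<Rightarrow> real" where
  "normBesselI \<mu> x = (\<Sum>n. (1/4)^n / (pochhammer (\<mu> + 1) n * fact n) * x^(2*n))"

end

theory Submission
  imports Defs
begin

text \<open>In the variable \<open>y = x\<^sup>2\<close> we have \<open>\<I>\<^sub>\<nu> = \<Sum> a\<^sub>n y\<^sup>n\<close>, and the coefficients of
  \<open>\<I>\<^bsub>\<nu>+1\<^esub>\<close> are \<open>b\<^sub>n = (\<nu>+1)/(\<nu>+1+n) a\<^sub>n\<close>. Both inequalities together say
  \<open>q < (\<I>\<^bsub>\<nu>+1\<^esub> - 1)/(\<I>\<^sub>\<nu> - 1) < p\<close>. Since \<open>b\<^sub>n \<le> (\<nu>+1)/(\<nu>+2) a\<^sub>n\<close> for \<open>n \<ge> 1\<close>, strictly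
  from \<open>n = 2\<close> on, this ratio lies in \<open>(0, (\<nu>+1)/(\<nu>+2))\<close>. It approaches \<open>b\<^sub>1/a\<^sub>1 = (\<nu>+1)/(\<nu>+2)\<close>
  as \<open>y \<rightarrow> 0\<close>, where the terms of order \<open>y\<^sup>2\<close> are negligible, and it approaches \<open>0\<close> as
  \<open>y \<rightarrow> \<infinity>\<close>, because \<open>b\<^sub>n/a\<^sub>n \<rightarrow> 0\<close> and the high-order terms dominate.\<close>

lemma sums_less:
  fixes f g :: "nat \<Rightarrow> real"
  assumes "\<And>n. f n \<le> g n" and "f i < g i" and "f sums s" and "g sums t"
  shows "s < t"
proof -
  have "(\<lambda>n. g n - f n) sums (t - s)"
    using assms(3,4) by (rule sums_diff[rotated])
  moreover have "0 < (\<Sum>n. g n - f n)"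
    using assms(1,2) calculation by (intro suminf_pos2[where i=i]) (auto simp: sums_iff)
  ultimately show ?thesis
    by (simp add: sums_iff)
qed

lemma powser_le_quadratic:
  fixes a :: "nat \<Rightarrow> real"
  assumes nonneg: "\<And>n. 0 \<le> a n" and "summable a" and "0 \<le> y" "y \<le> 1"
  shows "(\<Sum>n. a n * y^n) \<le> a 0 + a 1 * y + suminf a * y^2"
proof -
  have bound: "(\<lambda>n. (if n \<in> {0,1} then a n * y^n else 0) + a n * y^2)
          sums ((\<Sum>n\<in>{0,1}. a n * y^n) + suminf a * y^2)"
    using \<open>summable a\<close> by (intro sums_add sums_If_finite_set sums_mult2 summable_sums) auto
  have termwise: "a n * y^n \<le> (if n \<in> {0,1} then a n * y^n else 0) + a n * y^2" for n
  proof (cases "n \<in> {0,1}")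
    case False
    then have "y^n \<le> y^2"
      using assms(3,4) by (intro power_decreasing) auto
    then show ?thesis
      using False nonneg[of n] by (simp add: mult_left_mono)
  qed (use nonneg assms(3) in simp)
  have "summable (\<lambda>n. a n * y^n)"
    using assms by (intro summable_comparison_test[OF _ \<open>summable a\<close>])
      (auto intro!: exI[of _ 0] mult_left_le simp: power_le_one)
  then show ?thesis
    using sums_le[OF termwise _ bound] by (simp add: summable_sums)
qed

lemma powser_le_dominated:
  fixes a b :: "nat \<Rightarrow> real"
  assumes "\<And>n. 0 \<le> a n" "\<And>n. 0 \<le> b n" "0 \<le> c" "\<And>n. n \<ge> N \<Longrightarrow> b n \<le> c * a n"
    and "summable (\<lambda>n. a n * y^n)" "summable (\<lambda>n. b n * y^n)" "1 \<le> y"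
  shows "(\<Sum>n. b n * y^n) \<le> c * (\<Sum>n. a n * y^n) + (\<Sum>n<N. b n) * y^N"
proof -
  have bound: "(\<lambda>n. c * (a n * y^n) + (if n \<in> {..<N} then b n * y^N else 0))
          sums (c * (\<Sum>n. a n * y^n) + (\<Sum>n<N. b n * y^N))"
    using assms(5) by (intro sums_add sums_mult sums_If_finite_set summable_sums) auto
  have termwise: "b n * y^n \<le> c * (a n * y^n) + (if n \<in> {..<N} then b n * y^N else 0)" for n
  proof (cases "n < N")
    case True
    then have "b n * y^n \<le> b n * y^N"
      using assms(2,7) by (intro mult_left_mono power_increasing) auto
    moreover have "0 \<le> c * (a n * y^n)"
      using assms(1,3,7) by simp
    ultimately show ?thesis
      using True by simp
  next
    case False
    then show ?thesis
      using assms(4)[of n] assms(7) by (simp add: mult.assoc[symmetric] mult_right_mono)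
  qed
  show ?thesis
    using sums_le[OF termwise summable_sums[OF assms(6)] bound] by (simp add: sum_distrib_right)
qed

definition besselI_coeff :: "real \<Rightarrow> nat \<Rightarrow> real" where
  "besselI_coeff \<mu> n = (1/4)^n / (pochhammer (\<mu> + 1) n * fact n)"

lemma besselI_coeff_pos: "\<mu> > -1 \<Longrightarrow> besselI_coeff \<mu> n > 0"
  unfolding besselI_coeff_def by (intro divide_pos_pos mult_pos_pos pochhammer_pos) auto

lemma besselI_coeff_0 [simp]: "besselI_coeff \<mu> 0 = 1"
  by (simp add: besselI_coeff_def)

lemma besselI_coeff_Suc:
  assumes "\<mu> > -1"
  shows "besselI_coeff \<mu> (Suc n) = besselI_coeff \<mu> n / (4 * (\<mu> + 1 + n) * (n + 1))"
proof -
  have "pochhammer (\<mu> + 1) n > 0" "\<mu> + 1 + n > 0"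
    using assms by (auto intro: pochhammer_pos)
  then show ?thesis
    unfolding besselI_coeff_def by (simp add: pochhammer_Suc field_simps)
qed

lemma besselI_coeff_shift:
  assumes "\<nu> > -1"
  shows "besselI_coeff (\<nu> + 1) n = (\<nu> + 1) / (\<nu> + 1 + n) * besselI_coeff \<nu> n"
proof -
  have "(\<nu> + 1) * pochhammer (\<nu> + 1 + 1) n = pochhammer (\<nu> + 1) n * (\<nu> + 1 + n)"
    by (metis pochhammer_rec pochhammer_Suc)
  then have eq: "pochhammer (\<nu> + 1 + 1) n = pochhammer (\<nu> + 1) n * (\<nu> + 1 + n) / (\<nu> + 1)"
    using assms by (simp add: field_simps)
  have "pochhammer (\<nu> + 1) n > 0" "\<nu> + 1 + n > 0"
    using assms by (auto intro: pochhammer_pos)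
  then show ?thesis
    unfolding besselI_coeff_def eq using assms by (simp add: field_simps)
qed

lemma summable_besselI_powser:
  assumes "\<mu> > -1"
  shows "summable (\<lambda>n. besselI_coeff \<mu> n * y^n)"
proof (rule summable_ratio_test[where c="1/2" and N="nat \<lceil>\<bar>y\<bar>\<rceil>"])
  fix n assume "n \<ge> nat \<lceil>\<bar>y\<bar>\<rceil>"
  then have "\<bar>y\<bar> \<le> n"
    by linarith
  also have "\<dots> \<le> (\<mu> + 1 + n) * (n + 1)"
    using assms mult_mono[of "real n" "\<mu> + 1 + n" 1 "n + 1"] by simp
  moreover have "0 < (\<mu> + 1 + n) * (n + 1)"
    using assms by simp
  ultimately have ratio: "\<bar>y\<bar> / (4 * (\<mu> + 1 + n) * (n + 1)) \<le> 1/2"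
    by (auto simp: divide_le_eq algebra_simps)
  have c: "0 < besselI_coeff \<mu> n"
    using assms by (rule besselI_coeff_pos)
  have "norm (besselI_coeff \<mu> (Suc n) * y^Suc n)
          = besselI_coeff \<mu> n * \<bar>y\<bar>^n * (\<bar>y\<bar> / (4 * (\<mu> + 1 + n) * (n + 1)))"
    using c assms by (simp add: besselI_coeff_Suc abs_mult power_abs)
  also have "\<dots> \<le> besselI_coeff \<mu> n * \<bar>y\<bar>^n * (1/2)"
    using ratio c by (intro mult_left_mono) auto
  finally show "norm (besselI_coeff \<mu> (Suc n) * y^Suc n) \<le> 1/2 * norm (besselI_coeff \<mu> n * y^n)"
    using c by (simp add: abs_mult power_abs)
qed simp

lemma normBesselI_sums:
  "\<mu> > -1 \<Longrightarrow> (\<lambda>n. besselI_coeff \<mu> n * (x^2)^n) sums normBesselI \<mu> x"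
  using summable_besselI_powser
  by (simp add: normBesselI_def besselI_coeff_def power_mult summable_sums)

lemma normBesselI_gt_1:
  assumes "\<mu> > -1" "x \<noteq> 0"
  shows "normBesselI \<mu> x > 1"
proof (rule sums_less[OF _ _ sums_single normBesselI_sums[OF assms(1)]])
  show "(if n = 0 then 1 else 0) \<le> besselI_coeff \<mu> n * (x^2)^n" for n
    using besselI_coeff_pos[OF assms(1), of n] by simp
  show "(if (1::nat) = 0 then 1 else 0) < besselI_coeff \<mu> 1 * (x^2)^1"
    using besselI_coeff_pos[OF assms(1), of 1] assms(2) by simp
qed

lemma normBesselI_succ_less:
  assumes "\<nu> > -1" "x \<noteq> 0"
  shows "normBesselI (\<nu> + 1) x - 1 < (\<nu> + 1) / (\<nu> + 2) * (normBesselI \<nu> x - 1)"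
proof -
  define k where "k = (\<nu> + 1) / (\<nu> + 2)"
  define a where "a n = besselI_coeff \<nu> n * (x^2)^n" for n
  have a_pos: "n > 0 \<Longrightarrow> a n > 0" for n
    using besselI_coeff_pos[OF assms(1)] assms(2) by (simp add: a_def)
  have shift: "besselI_coeff (\<nu> + 1) n * (x^2)^n = (\<nu> + 1) / (\<nu> + 1 + n) * a n" for n
    by (simp add: a_def besselI_coeff_shift[OF assms(1)])
  have "normBesselI (\<nu> + 1) x < (1 - k) + k * normBesselI \<nu> x"
  proof (rule sums_less[OF _ _ normBesselI_sums sums_add[OF sums_single sums_mult]])
    show "besselI_coeff (\<nu> + 1) n * (x^2)^n \<le> (if n = 0 then 1 - k else 0) + k * a n" for n
    proof (cases "n = 0")
      case False
      then have "(\<nu> + 1) / (\<nu> + 1 + n) \<le> k"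
        using assms(1) by (auto simp: k_def intro!: frac_le)
      then have "(\<nu> + 1) / (\<nu> + 1 + n) * a n \<le> k * a n"
        using a_pos[of n] False by (intro mult_right_mono) auto
      then show ?thesis
        using False shift[of n] by simp
    qed (simp add: a_def)
    have "(\<nu> + 1) / (\<nu> + 1 + 2) < k"
      using assms(1) by (simp add: k_def divide_strict_left_mono)
    then have "(\<nu> + 1) / (\<nu> + 1 + 2) * a 2 < k * a 2"
      using a_pos[of 2] by (intro mult_strict_right_mono) auto
    then show "besselI_coeff (\<nu> + 1) 2 * (x^2)^2 < (if (2::nat) = 0 then 1 - k else 0) + k * a 2"
      using shift[of 2] by simp
    show "a sums normBesselI \<nu> x"
      using normBesselI_sums[OF assms(1)] by (simp add: a_def[abs_def])
  qed (use assms in simp)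
  then show ?thesis
    unfolding k_def by argo
qed

lemma besselI_coeff_succ_dominated:
  assumes "\<nu> > -1" "c > 0"
  obtains N where "\<And>n. n \<ge> N \<Longrightarrow> besselI_coeff (\<nu> + 1) n \<le> c * besselI_coeff \<nu> n"
proof
  fix n assume "n \<ge> nat \<lceil>(\<nu> + 1) / c\<rceil>"
  then have "(\<nu> + 1) / c \<le> n"
    by linarith
  then have "\<nu> + 1 \<le> c * n"
    using assms(2) by (simp add: pos_divide_le_eq mult.commute)
  also have "\<dots> \<le> c * (\<nu> + 1 + n)"
    using assms by (intro mult_left_mono) auto
  finally have "(\<nu> + 1) / (\<nu> + 1 + n) \<le> c"
    using assms(1) by (simp add: divide_le_eq mult.commute)
  then show "besselI_coeff (\<nu> + 1) n \<le> c * besselI_coeff \<nu> n"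
    using besselI_coeff_pos[OF assms(1), of n] mult_right_mono
    unfolding besselI_coeff_shift[OF assms(1)] by fastforce
qed

lemma normBesselI_le_quadratic:
  assumes "\<mu> > -1" "x^2 \<le> 1"
  shows "normBesselI \<mu> x \<le> 1 + besselI_coeff \<mu> 1 * x^2 + normBesselI \<mu> 1 * (x^2)^2"
proof -
  have "(\<lambda>n. besselI_coeff \<mu> n) sums normBesselI \<mu> 1"
    using normBesselI_sums[OF assms(1), of 1] by simp
  then show ?thesis
    using powser_le_quadratic[of "besselI_coeff \<mu>" "x^2"] normBesselI_sums[OF assms(1), of x]
      besselI_coeff_pos[OF assms(1)] assms(2)
    by (auto simp: sums_iff less_imp_le)
qed

lemma normBesselI_succ_ratio_near_zero:
  assumes "\<nu> > -1" "p < (\<nu> + 1) / (\<nu> + 2)"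
  shows "\<exists>x>0. p * (normBesselI \<nu> x - 1) \<le> normBesselI (\<nu> + 1) x - 1"
proof -
  define k where "k = (\<nu> + 1) / (\<nu> + 2)"
  define p' where "p' = max p 0"
  define a1 where "a1 = besselI_coeff \<nu> 1"
  define A1 where "A1 = normBesselI \<nu> 1"
  have "k < 1" "p' < k" "0 \<le> p'"
    using assms by (auto simp: k_def p'_def)
  have "a1 > 0" "A1 > 1"
    using assms(1) by (auto simp: a1_def A1_def besselI_coeff_pos normBesselI_gt_1)
  define y where "y = min 1 ((k - p') * a1 / A1)"
  have "0 < y" "y \<le> 1" and y_small: "A1 * y \<le> (k - p') * a1"
    using \<open>p' < k\<close> \<open>a1 > 0\<close> \<open>A1 > 1\<close> by (auto simp: y_def min_def field_simps)
  define x where "x = sqrt y"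
  have "x > 0" "x^2 = y"
    using \<open>0 < y\<close> by (auto simp: x_def)
  have upper: "normBesselI \<nu> x \<le> 1 + a1 * y + A1 * y^2"
    using normBesselI_le_quadratic[OF assms(1), of x] \<open>y \<le> 1\<close> \<open>x^2 = y\<close> by (simp add: a1_def A1_def)
  have "besselI_coeff (\<nu> + 1) 1 = k * a1"
    using besselI_coeff_shift[OF assms(1), of 1] by (simp add: k_def a1_def add.assoc)
  then have lower: "1 + k * a1 * y \<le> normBesselI (\<nu> + 1) x"
    using sum_le_suminf[of "\<lambda>n. besselI_coeff (\<nu> + 1) n * y^n" "{0,1}"]
      normBesselI_sums[of "\<nu> + 1" x] besselI_coeff_pos[of "\<nu> + 1"] assms(1) \<open>0 < y\<close> \<open>x^2 = y\<close>
    by (auto simp: sums_iff less_imp_le)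
  have "p * (normBesselI \<nu> x - 1) \<le> p' * (normBesselI \<nu> x - 1)"
    using normBesselI_gt_1[OF assms(1), of x] \<open>x > 0\<close> by (auto simp: p'_def intro: mult_right_mono)
  also have "\<dots> \<le> p' * (a1 * y + A1 * y^2)"
    using upper \<open>0 \<le> p'\<close> by (intro mult_left_mono) auto
  also have "\<dots> = y * (p' * a1 + p' * (A1 * y))"
    by (simp add: power2_eq_square algebra_simps)
  also have "\<dots> \<le> y * (p' * a1 + (k - p') * a1)"
  proof -
    have "p' * (A1 * y) \<le> A1 * y"
      using \<open>0 \<le> p'\<close> \<open>p' < k\<close> \<open>k < 1\<close> \<open>A1 > 1\<close> \<open>0 < y\<close> by (intro mult_left_le_one_le) auto
    then show ?thesis
      using y_small \<open>0 < y\<close> by (intro mult_left_mono) auto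
  qed
  also have "\<dots> = k * a1 * y"
    by (simp add: algebra_simps)
  finally show ?thesis
    using lower \<open>x > 0\<close> by force
qed

lemma normBesselI_succ_ratio_near_infinity:
  assumes "\<nu> > -1" "q > 0"
  shows "\<exists>x>0. normBesselI (\<nu> + 1) x - 1 \<le> q * (normBesselI \<nu> x - 1)"
proof -
  define c where "c = q / 2"
  have "c > 0"
    using assms(2) by (simp add: c_def)
  then obtain N where dominated: "\<And>n. n \<ge> N \<Longrightarrow> besselI_coeff (\<nu> + 1) n \<le> c * besselI_coeff \<nu> n"
    using besselI_coeff_succ_dominated[OF assms(1)] by blast
  define S where "S = (\<Sum>n<N. besselI_coeff (\<nu> + 1) n)"
  define a where "a = besselI_coeff \<nu> (Suc N)"
  have "S \<ge> 0"
    unfolding S_def using besselI_coeff_pos[of "\<nu> + 1"] assms(1) by (simp add: sum_nonneg less_imp_le)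
  have "a > 0"
    unfolding a_def using assms(1) by (rule besselI_coeff_pos)
  define y where "y = max 1 ((S + q) / (c * a))"
  have "y \<ge> 1" and y_large: "S + q \<le> c * a * y"
    using \<open>c > 0\<close> \<open>a > 0\<close> by (auto simp: y_def max_def field_simps)
  define x where "x = sqrt y"
  have "x > 0" "x^2 = y"
    using \<open>y \<ge> 1\<close> by (auto simp: x_def)
  have upper: "normBesselI (\<nu> + 1) x \<le> c * normBesselI \<nu> x + S * y^N"
    using powser_le_dominated[of "besselI_coeff \<nu>" "besselI_coeff (\<nu> + 1)" c N y]
      normBesselI_sums[of \<nu> x] normBesselI_sums[of "\<nu> + 1" x] dominated
      besselI_coeff_pos[of \<nu>] besselI_coeff_pos[of "\<nu> + 1"] assms(1) \<open>c > 0\<close> \<open>y \<ge> 1\<close> \<open>x^2 = y\<close>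
    by (auto simp: S_def sums_iff less_imp_le)
  have lower: "a * y^Suc N \<le> normBesselI \<nu> x"
    using sum_le_suminf[of "\<lambda>n. besselI_coeff \<nu> n * y^n" "{Suc N}"]
      normBesselI_sums[of \<nu> x] besselI_coeff_pos[of \<nu>] assms(1) \<open>y \<ge> 1\<close> \<open>x^2 = y\<close>
    by (auto simp: a_def sums_iff less_imp_le)
  have "S * y^N + q \<le> (S + q) * y^N"
    using assms(2) \<open>y \<ge> 1\<close> by (simp add: distrib_right)
  also have "\<dots> \<le> c * a * y * y^N"
    using y_large \<open>y \<ge> 1\<close> by (intro mult_right_mono) auto
  also have "\<dots> \<le> c * normBesselI \<nu> x"
    using lower \<open>c > 0\<close> by (simp add: mult.assoc mult_left_mono)
  finally have "S * y^N + q \<le> c * normBesselI \<nu> x" .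
  then show ?thesis
    using upper \<open>x > 0\<close> by (auto simp: c_def algebra_simps)
qed

lemma affine_ratio_gt_1_iff:
  fixes A B p :: real
  assumes "B > 0"
  shows "(1 - p) * (1 / B) + p * (A / B) > 1 \<longleftrightarrow> B - 1 < p * (A - 1)"
proof -
  have "(1 - p) * (1 / B) + p * (A / B) = (1 - p + p * A) / B"
    using assms by (simp add: field_simps)
  then show ?thesis
    using assms by (simp add: less_divide_eq_1_pos algebra_simps)
qed

lemma affine_ratio_lt_1_iff:
  fixes A B p :: real
  assumes "B > 0"
  shows "1 > (1 - p) * (1 / B) + p * (A / B) \<longleftrightarrow> p * (A - 1) < B - 1"
proof -
  have "(1 - p) * (1 / B) + p * (A / B) = (1 - p + p * A) / B"
    using assms by (simp add: field_simps)
  then show ?thesis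
    using assms by (simp add: divide_less_eq_1_pos algebra_simps)
qed

theorem theorem4p2:
  fixes \<nu> p q :: real
  assumes "\<nu> > -1"
  shows "(\<forall>x>0. (1 - p) * (1 / normBesselI (\<nu>+1) x) + p * (normBesselI \<nu> x / normBesselI (\<nu>+1) x) > 1
               \<and> 1 > (1 - q) * (1 / normBesselI (\<nu>+1) x) + q * (normBesselI \<nu> x / normBesselI (\<nu>+1) x))
         \<longleftrightarrow> (p \<ge> (\<nu>+1)/(\<nu>+2) \<and> q \<le> 0)"
proof -
  let ?A = "normBesselI \<nu>" and ?B = "normBesselI (\<nu> + 1)"
  have A_gt_1: "?A x > 1" and B_gt_1: "?B x > 1" if "x > 0" for x
    using assms that by (auto intro: normBesselI_gt_1)
  have "(1 - p) * (1 / ?B x) + p * (?A x / ?B x) > 1 \<and> 1 > (1 - q) * (1 / ?B x) + q * (?A x / ?B x)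
          \<longleftrightarrow> ?B x - 1 < p * (?A x - 1) \<and> q * (?A x - 1) < ?B x - 1" if "x > 0" for x
  proof -
    have "?B x > 0"
      using B_gt_1[OF that] by simp
    from affine_ratio_gt_1_iff[OF this] affine_ratio_lt_1_iff[OF this] show ?thesis
      by blast
  qed
  then have "(\<forall>x>0. (1 - p) * (1 / ?B x) + p * (?A x / ?B x) > 1
                  \<and> 1 > (1 - q) * (1 / ?B x) + q * (?A x / ?B x))
             \<longleftrightarrow> (\<forall>x>0. ?B x - 1 < p * (?A x - 1) \<and> q * (?A x - 1) < ?B x - 1)"
    by blast
  also have "\<dots> \<longleftrightarrow> (\<nu> + 1) / (\<nu> + 2) \<le> p \<and> q \<le> 0"
  proof safe
    assume bounds: "\<forall>x>0. ?B x - 1 < p * (?A x - 1) \<and> q * (?A x - 1) < ?B x - 1"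
    show "(\<nu> + 1) / (\<nu> + 2) \<le> p"
      using normBesselI_succ_ratio_near_zero[OF assms, of p] bounds by force
    show "q \<le> 0"
      using normBesselI_succ_ratio_near_infinity[OF assms, of q] bounds by force
  next
    fix x :: real
    assume "(\<nu> + 1) / (\<nu> + 2) \<le> p" "q \<le> 0" "x > 0"
    then have "(\<nu> + 1) / (\<nu> + 2) * (?A x - 1) \<le> p * (?A x - 1)" "q * (?A x - 1) \<le> 0"
      using A_gt_1[of x] by (intro mult_right_mono mult_nonpos_nonneg; simp)+
    then show "?B x - 1 < p * (?A x - 1)" "q * (?A x - 1) < ?B x - 1"
      using normBesselI_succ_less[OF assms, of x] B_gt_1 \<open>x > 0\<close> by fastforce+
  qed
  finally show ?thesis .
qed

end
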